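(* Let $0<\alpha<2$. There exists $\delta=\delta(\alpha)>0$ (one may take $\delta=\min\{1/4,(3C)^{-1/(1+\alpha)}\}$ with $C=2^{\alpha+1}(1+2\alpha)$) such that the following holds. Let $\rho:\mathbb{R}\to\mathbb{R}$ be a $C^1$, $1$-periodic, even function which is nondecreasing on $[0,1/2]$. For $x\in(0,1/2]$ define $$I(x)=\int_0^x(\rho(y)-\rho(x))\left(\frac{1}{(x+y)^\alpha}+\frac{1}{(x-y)^\alpha}\right)dy,\qquad II_2(x)=\sum_{l=1}^\infty\int_{l-x}^{l+x}(\rho(y)-\rho(x))\left(\frac{1}{(x+y)^\alpha}-\frac{1}{(y-x)^\alpha}\right)dy.$$ Then $I(x)+II_2(x)\le0$ for all $x\in(0,\delta]$. *)

theory Defs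
  imports "HOL-Analysis.Analysis"
begin

text \<open>The integral I(x) (Henstock-Kurzweil integral over [0,x]; the integrand is
absolutely integrable for 0 < alpha < 2 and rho C^1).\<close>
definition I_term :: "real \<Rightarrow> (real \<Rightarrow> real) \<Rightarrow> real \<Rightarrow> real" where
  "I_term \<alpha> \<rho> x =
     integral {0..x} (\<lambda>y. (\<rho> y - \<rho> x) * (1 / (x + y) powr \<alpha> + 1 / (x - y) powr \<alpha>))"

definition II2_term :: "real \<Rightarrow> (real \<Rightarrow> real) \<Rightarrow> real \<Rightarrow> real" where
  "II2_term \<alpha> \<rho> x =
     (\<Sum>l. integral {real (Suc l) - x .. real (Suc l) + x}
        (\<lambda>y. (\<rho> y - \<rho> x) * (1 / (x + y) powr \<alpha> - 1 / (y - x) powr \<alpha>)))"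

end

theory Submission
  imports Defs
begin

text \<open>
  Let \<open>J = gap_integral \<rho> x\<close>, the integral of \<open>\<rho>(x) - \<rho>(y)\<close> over \<open>[0, x]\<close>; it is
  nonnegative because \<open>\<rho>\<close> is even and nondecreasing on \<open>[0, 1/2]\<close>. On \<open>[0, x)\<close> the
  kernel of \<open>I\<close> is at least \<open>x^(-\<alpha>)\<close>, so \<open>I \<le> -x^(-\<alpha>) J\<close>. In the \<open>l\<close>-th summand
  of \<open>II_2\<close> the mean value theorem bounds the kernel by \<open>2\<alpha>x (l/2)^(-\<alpha>-1)\<close>, while
  periodicity and evenness turn the integral of \<open>\<rho>(x) - \<rho>(y)\<close> over \<open>[l - x, l + x]\<close>
  into \<open>2J\<close>. Hence \<open>II_2 \<le> C x J\<close> with \<open>C = 4\<alpha> \<Sum>_l (l/2)^(-\<alpha>-1)\<close>, and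
  \<open>I + II_2 \<le> (C x - x^(-\<alpha>)) J \<le> 0\<close> as soon as \<open>x^(1+\<alpha>) \<le> 1/(C + 1)\<close>.
\<close>

lemma periodic_add_of_nat:
  fixes \<rho> :: "real \<Rightarrow> 'a"
  assumes "\<And>t. \<rho> (t + 1) = \<rho> t"
  shows "\<rho> (t + real n) = \<rho> t"
proof (induction n)
  case (Suc n)
  have "\<rho> (t + real (Suc n)) = \<rho> (t + real n + 1)" by (simp add: algebra_simps)
  with assms Suc show ?case by simp
qed simp

lemma even_mono_on_le:
  fixes \<rho> :: "real \<Rightarrow> real"
  assumes "\<And>t. \<rho> (- t) = \<rho> t" and "mono_on {0..c} \<rho>" and "\<bar>z\<bar> \<le> x" and "x \<le> c"
  shows "\<rho> z \<le> \<rho> x"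
proof -
  have "\<rho> z = \<rho> \<bar>z\<bar>" using assms(1) by (cases "z \<ge> 0") auto
  also have "\<dots> \<le> \<rho> x" using assms(3,4) by (intro mono_onD[OF assms(2)]) auto
  finally show ?thesis .
qed

lemma C1_differentiable_on_imp_lipschitz_on_interval:
  fixes \<rho> :: "real \<Rightarrow> real"
  assumes "\<rho> C1_differentiable_on UNIV"
  obtains L where "L-lipschitz_on {a..b} \<rho>"
proof -
  obtain D where D: "\<And>t. (\<rho> has_vector_derivative D t) (at t)" and "continuous_on UNIV D"
    using assms unfolding C1_differentiable_on_def by auto
  then have "bounded (D ` {a..b})"
    by (meson compact_Icc compact_continuous_image compact_imp_bounded continuous_on_subset subset_UNIV)
  then obtain B where "B > 0" and "\<forall>t\<in>{a..b}. norm (D t) \<le> B"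
    unfolding bounded_pos by blast
  then have B: "\<And>t. t \<in> {a..b} \<Longrightarrow> norm (D t) \<le> B" by blast
  have "B-lipschitz_on {a..b} \<rho>"
  proof (rule lipschitz_onI)
    show "dist (\<rho> y) (\<rho> z) \<le> B * dist y z" if "y \<in> {a..b}" "z \<in> {a..b}" for y z
      unfolding dist_norm
    proof (rule field_differentiable_bound[OF convex_box(1)[of a b, unfolded box_real] _ B that])
      show "(\<rho> has_field_derivative D t) (at t within {a..b})" for t
        using D[of t]
        by (simp add: has_real_derivative_iff_has_vector_derivative has_vector_derivative_at_within)
    qed
  qed (use \<open>B > 0\<close> in simp)
  then show ?thesis by (rule that)
qed

lemma integrable_on_powr_diff_from_0:
  fixes a c :: real
  assumes "a > -1" and "c \<ge> 0"
  shows "(\<lambda>t. (c - t) powr a) integrable_on {0..c}"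
proof -
  have "(\<lambda>t. (- t) powr a) integrable_on {-c..-0}"
    by (rule Henstock_Kurzweil_Integration.integrable_reflect_real[THEN iffD2, OF integrable_on_powr_from_0[OF assms]])
  from integrable_shift_real_ivl[OF this, of "-c"] show ?thesis by simp
qed

lemma integral_even_periodic_centered:
  fixes f :: "real \<Rightarrow> real"
  assumes "continuous_on UNIV f" and "\<And>t. f (- t) = f t" and "\<And>t. f (t + k) = f t" and "0 \<le> x"
  shows "integral {k - x..k + x} f = 2 * integral {0..x} f"
proof -
  have int: "f integrable_on {a..b}" for a b
    by (meson assms(1) continuous_on_subset integrable_continuous_interval subset_UNIV)
  have "integral {k - x..k + x} f = integral {-x..x} f"
    using integral_shift_real_ivl[of "k - x" k "k + x" f] assms(3) by simp
  also have "\<dots> = integral {-x..0} f + integral {0..x} f"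
    using Henstock_Kurzweil_Integration.integral_combine[of "-x" 0 x f] int assms(4) by simp
  also have "integral {-x..0} f = integral {0..x} f"
    using Henstock_Kurzweil_Integration.integral_reflect_real[of x 0 f] assms(2) by simp
  finally show ?thesis by simp
qed

lemma inverse_powr_diff_bounds:
  fixes \<alpha> x y k :: real
  assumes "0 \<le> \<alpha>" and "0 < x" and "4 * x \<le> k" and "y \<in> {k - x..k + x}"
  shows "0 \<le> 1 / (y - x) powr \<alpha> - 1 / (x + y) powr \<alpha>"
    and "1 / (y - x) powr \<alpha> - 1 / (x + y) powr \<alpha> \<le> 2 * x * \<alpha> * (k / 2) powr (- \<alpha> - 1)"
proof -
  have "k / 2 \<le> y - x" and "0 < k / 2" using assms by auto
  then show "0 \<le> 1 / (y - x) powr \<alpha> - 1 / (x + y) powr \<alpha>"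
    using assms by (simp add: divide_left_mono powr_mono2)
  define B where "B = \<alpha> * (k / 2) powr (- \<alpha> - 1)"
  have "norm ((y - x) powr - \<alpha> - (y + x) powr - \<alpha>) \<le> B * norm ((y - x) - (y + x))"
  proof (rule field_differentiable_bound[of "{y - x..y + x}"])
    fix t assume "t \<in> {y - x..y + x}"
    with \<open>k / 2 \<le> y - x\<close> \<open>0 < k / 2\<close> have "k / 2 \<le> t" "0 < t" by auto
    show "((\<lambda>t. t powr - \<alpha>) has_field_derivative - \<alpha> * t powr (- \<alpha> - 1)) (at t within {y - x..y + x})"
      using has_real_derivative_powr[OF \<open>0 < t\<close>, of "- \<alpha>"] by (simp add: has_field_derivative_at_within)
    show "norm (- \<alpha> * t powr (- \<alpha> - 1)) \<le> B"
      unfolding B_def using \<open>k / 2 \<le> t\<close> \<open>0 < k / 2\<close> assms(1)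
      by (simp add: abs_mult mult_left_mono powr_mono2')
  qed (use assms in auto)
  moreover have "(y - x) powr - \<alpha> = 1 / (y - x) powr \<alpha>" "(y + x) powr - \<alpha> = 1 / (x + y) powr \<alpha>"
    by (simp_all add: powr_minus_divide add.commute)
  ultimately have "\<bar>1 / (y - x) powr \<alpha> - 1 / (x + y) powr \<alpha>\<bar> \<le> 2 * x * \<alpha> * (k / 2) powr (- \<alpha> - 1)"
    using assms by (simp add: B_def mult_ac)
  then show "1 / (y - x) powr \<alpha> - 1 / (x + y) powr \<alpha> \<le> 2 * x * \<alpha> * (k / 2) powr (- \<alpha> - 1)"
    by (rule abs_le_D1)
qed

lemma mult_le_inverse_powr:
  fixes \<alpha> C x :: real
  assumes "0 < \<alpha>" and "0 \<le> C" and "0 < x" and small: "x \<le> (1 / (C + 1)) powr (1 / (1 + \<alpha>))"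
  shows "C * x \<le> 1 / x powr \<alpha>"
proof -
  have "x powr (1 + \<alpha>) \<le> ((1 / (C + 1)) powr (1 / (1 + \<alpha>))) powr (1 + \<alpha>)"
    using assms by (intro powr_mono2) auto
  also have "\<dots> = 1 / (C + 1)"
    using assms by (simp add: powr_powr)
  finally have "C * (x * x powr \<alpha>) \<le> C * (1 / (C + 1))"
    using assms by (intro mult_left_mono) (auto simp: powr_add)
  also have "\<dots> \<le> 1"
    using assms by (simp add: field_simps)
  finally show ?thesis
    using assms by (simp add: le_divide_eq mult.assoc)
qed

lemma summable_Suc_half_powr:
  fixes \<alpha> :: real
  assumes "0 < \<alpha>"
  shows "summable (\<lambda>n. (real (Suc n) / 2) powr (- \<alpha> - 1))"
proof -
  have "summable (\<lambda>n. real n powr (- \<alpha> - 1))"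
    using assms by (simp add: summable_real_powr_iff)
  then have "summable (\<lambda>n. real (Suc n) powr (- \<alpha> - 1) / 2 powr (- \<alpha> - 1))"
    by (intro summable_divide) (subst summable_Suc_iff)
  then show ?thesis
    by (simp add: powr_divide)
qed

definition gap_integral :: "(real \<Rightarrow> real) \<Rightarrow> real \<Rightarrow> real" where
  "gap_integral \<rho> x = integral {0..x} (\<lambda>y. \<rho> x - \<rho> y)"

lemma gap_integral_nonneg:
  assumes "continuous_on {0..x} \<rho>" and "\<And>y. y \<in> {0..x} \<Longrightarrow> \<rho> y \<le> \<rho> x"
  shows "0 \<le> gap_integral \<rho> x"
  unfolding gap_integral_def using assms
  by (intro integral_nonneg integrable_continuous_interval continuous_intros) auto

text \<open>Near \<open>y = x\<close> the Lipschitz bound on \<open>\<rho>\<close> dominates the integrand by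
  \<open>2L(x - y)^(1-\<alpha>)\<close>, which is integrable because \<open>\<alpha> < 2\<close>.\<close>

lemma I_integrand_integrable:
  fixes \<rho> :: "real \<Rightarrow> real"
  assumes "0 \<le> \<alpha>" "\<alpha> < 2" and "0 < x" and lip: "L-lipschitz_on {0..x} \<rho>"
  shows "(\<lambda>y. (\<rho> y - \<rho> x) * (1 / (x + y) powr \<alpha> + 1 / (x - y) powr \<alpha>)) integrable_on {0..x}"
    (is "?f integrable_on _")
proof -
  define b where "b y = 2 * L * (x - y) powr (1 - \<alpha>)" for y
  have "b integrable_on {0..x}"
    unfolding b_def using assms
    by (intro integrable_on_mult_right integrable_on_powr_diff_from_0) auto
  then have b: "b integrable_on {0<..<x}"
    by (simp only: integrable_on_Icc_iff_Ioo)
  have "continuous_on {0<..<x} ?f"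
    using lipschitz_on_continuous_on[OF lip]
    by (intro continuous_intros) (auto elim: continuous_on_subset)
  then have "?f \<in> borel_measurable (lebesgue_on {0<..<x})"
    by (rule continuous_imp_measurable_on_sets_lebesgue) auto
  moreover have "norm (?f y) \<le> b y" if y: "y \<in> {0<..<x}" for y
  proof -
    have "1 / (x + y) powr \<alpha> \<le> 1 / (x - y) powr \<alpha>"
      using y assms by (intro divide_left_mono powr_mono2) auto
    then have kernel: "1 / (x + y) powr \<alpha> + 1 / (x - y) powr \<alpha> \<le> 2 * (1 / (x - y) powr \<alpha>)"
      by linarith
    have "\<bar>\<rho> y - \<rho> x\<bar> \<le> L * (x - y)"
      using lipschitz_onD[OF lip, of y x] y by (simp add: dist_real_def)
    then have "norm (?f y) \<le> L * (x - y) * (2 * (1 / (x - y) powr \<alpha>))"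
      unfolding real_norm_def abs_mult using kernel
      by (intro mult_mono) auto
    also have "\<dots> = b y"
      using y by (simp add: b_def powr_diff)
    finally show ?thesis .
  qed
  ultimately have "?f absolutely_integrable_on {0<..<x}"
    by (intro measurable_bounded_by_integrable_imp_absolutely_integrable[OF _ _ b]) auto
  then have "?f integrable_on {0<..<x}"
    by (rule set_lebesgue_integral_eq_integral(1))
  then show ?thesis
    by (simp only: integrable_on_Icc_iff_Ioo)
qed

lemma I_term_le:
  fixes \<rho> :: "real \<Rightarrow> real"
  assumes "0 \<le> \<alpha>" "\<alpha> < 2" and "0 < x" and lip: "L-lipschitz_on {0..x} \<rho>"
    and below: "\<And>y. y \<in> {0..x} \<Longrightarrow> \<rho> y \<le> \<rho> x"
  shows "I_term \<alpha> \<rho> x \<le> - gap_integral \<rho> x / x powr \<alpha>"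
proof -
  have "(\<lambda>y. \<rho> x - \<rho> y) integrable_on {0..x}"
    using lipschitz_on_continuous_on[OF lip]
    by (intro integrable_continuous_interval continuous_intros)
  then have "(\<lambda>y. - ((\<rho> x - \<rho> y) / x powr \<alpha>)) integrable_on {0..x}"
    by (intro integrable_on_divide integrable_neg)
  then have "I_term \<alpha> \<rho> x \<le> integral {0..x} (\<lambda>y. - ((\<rho> x - \<rho> y) / x powr \<alpha>))"
    unfolding I_term_def
  proof (rule integral_le[OF I_integrand_integrable[OF assms(1-4)]])
    fix y assume y: "y \<in> {0..x}"
    show "(\<rho> y - \<rho> x) * (1 / (x + y) powr \<alpha> + 1 / (x - y) powr \<alpha>) \<le> - ((\<rho> x - \<rho> y) / x powr \<alpha>)"
    proof (cases "y = x")
      case False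
      then have "1 / x powr \<alpha> \<le> 1 / (x - y) powr \<alpha>"
        using y assms by (intro divide_left_mono powr_mono2) auto
      moreover have "0 \<le> 1 / (x + y) powr \<alpha>"
        by simp
      ultimately have "1 / x powr \<alpha> \<le> 1 / (x + y) powr \<alpha> + 1 / (x - y) powr \<alpha>"
        by linarith
      from mult_left_mono[OF this, of "\<rho> x - \<rho> y"] below[OF y]
      have "(\<rho> x - \<rho> y) / x powr \<alpha> \<le> (\<rho> x - \<rho> y) * (1 / (x + y) powr \<alpha> + 1 / (x - y) powr \<alpha>)"
        by simp
      moreover have "(\<rho> y - \<rho> x) * (1 / (x + y) powr \<alpha> + 1 / (x - y) powr \<alpha>) =
          - ((\<rho> x - \<rho> y) * (1 / (x + y) powr \<alpha> + 1 / (x - y) powr \<alpha>))"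
        by algebra
      ultimately show ?thesis
        by linarith
    qed simp
  qed
  also have "\<dots> = - gap_integral \<rho> x / x powr \<alpha>"
    unfolding gap_integral_def
    by (simp only: integral_neg Henstock_Kurzweil_Integration.integral_divide minus_divide_left)
  finally show ?thesis .
qed

definition II2_summand :: "real \<Rightarrow> (real \<Rightarrow> real) \<Rightarrow> real \<Rightarrow> real \<Rightarrow> real" where
  "II2_summand \<alpha> \<rho> x k =
     integral {k - x..k + x} (\<lambda>y. (\<rho> y - \<rho> x) * (1 / (x + y) powr \<alpha> - 1 / (y - x) powr \<alpha>))"

lemma II2_term_eq_suminf: "II2_term \<alpha> \<rho> x = (\<Sum>l. II2_summand \<alpha> \<rho> x (real (Suc l)))"
  unfolding II2_term_def II2_summand_def ..

lemma II2_summand_bounds: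
  fixes \<rho> :: "real \<Rightarrow> real"
  assumes "0 \<le> \<alpha>" and "0 < x" and "4 * x \<le> k" and cont: "continuous_on UNIV \<rho>"
    and even: "\<And>t. \<rho> (- t) = \<rho> t" and shift: "\<And>t. \<rho> (t + k) = \<rho> t"
    and below: "\<And>y. \<bar>y\<bar> \<le> x \<Longrightarrow> \<rho> y \<le> \<rho> x"
  shows "0 \<le> II2_summand \<alpha> \<rho> x k"
    and "II2_summand \<alpha> \<rho> x k \<le> 4 * \<alpha> * x * (k / 2) powr (- \<alpha> - 1) * gap_integral \<rho> x"
proof -
  define g where "g = (\<lambda>y. \<rho> x - \<rho> y)"
  define K where "K y = 1 / (y - x) powr \<alpha> - 1 / (x + y) powr \<alpha>" for y
  define c where "c = 2 * x * \<alpha> * (k / 2) powr (- \<alpha> - 1)"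
  have g_cont: "continuous_on UNIV g"
    unfolding g_def using cont by (intro continuous_intros)
  have g_nonneg: "0 \<le> g y" if "y \<in> {k - x..k + x}" for y
    using below[of "y - k"] shift[of "y - k"] that by (auto simp: g_def abs_le_iff)
  have K: "0 \<le> K y" "K y \<le> c" if "y \<in> {k - x..k + x}" for y
    unfolding K_def c_def using inverse_powr_diff_bounds[OF assms(1-3) that] by auto
  have "(\<rho> y - \<rho> x) * (1 / (x + y) powr \<alpha> - 1 / (y - x) powr \<alpha>) = g y * K y" for y
    unfolding g_def K_def by (metis minus_diff_eq minus_mult_minus)
  then have eq: "II2_summand \<alpha> \<rho> x k = integral {k - x..k + x} (\<lambda>y. g y * K y)"
    by (simp add: II2_summand_def)
  have int: "(\<lambda>y. g y * K y) integrable_on {k - x..k + x}"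
    unfolding g_def K_def using cont assms(2,3)
    by (intro integrable_continuous_interval continuous_intros) (auto elim: continuous_on_subset)
  show "0 \<le> II2_summand \<alpha> \<rho> x k"
    unfolding eq using g_nonneg K by (intro integral_nonneg[OF int]) auto
  have "II2_summand \<alpha> \<rho> x k \<le> integral {k - x..k + x} (\<lambda>y. c * g y)"
    unfolding eq
  proof (rule integral_le[OF int])
    show "(\<lambda>y. c * g y) integrable_on {k - x..k + x}"
      using g_cont by (intro integrable_on_mult_right integrable_continuous_interval)
        (rule continuous_on_subset, auto)
    show "g y * K y \<le> c * g y" if "y \<in> {k - x..k + x}" for y
      using mult_right_mono[OF K(2) g_nonneg, OF that that] by (simp add: mult.commute)
  qed
  also have "\<dots> = c * integral {k - x..k + x} g"
    by simp
  also have "integral {k - x..k + x} g = 2 * integral {0..x} g"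
    by (rule integral_even_periodic_centered[OF g_cont]) (use even shift assms(2) in \<open>auto simp: g_def\<close>)
  also have "integral {0..x} g = gap_integral \<rho> x"
    by (simp add: g_def gap_integral_def)
  finally show "II2_summand \<alpha> \<rho> x k \<le> 4 * \<alpha> * x * (k / 2) powr (- \<alpha> - 1) * gap_integral \<rho> x"
    by (simp add: c_def mult_ac)
qed

lemma II2_term_le:
  fixes \<rho> :: "real \<Rightarrow> real"
  assumes "0 \<le> \<alpha>" and "0 < x" and "4 * x \<le> 1" and cont: "continuous_on UNIV \<rho>"
    and even: "\<And>t. \<rho> (- t) = \<rho> t" and periodic: "\<And>t. \<rho> (t + 1) = \<rho> t"
    and below: "\<And>y. \<bar>y\<bar> \<le> x \<Longrightarrow> \<rho> y \<le> \<rho> x"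
    and S: "(\<lambda>n. (real (Suc n) / 2) powr (- \<alpha> - 1)) sums S"
  shows "II2_term \<alpha> \<rho> x \<le> 4 * \<alpha> * S * x * gap_integral \<rho> x"
proof -
  define b where "b n = 4 * \<alpha> * x * gap_integral \<rho> x * (real (Suc n) / 2) powr (- \<alpha> - 1)" for n
  have bounds: "0 \<le> II2_summand \<alpha> \<rho> x (real (Suc n))" "II2_summand \<alpha> \<rho> x (real (Suc n)) \<le> b n" for n
    using II2_summand_bounds[OF assms(1,2) _ cont even periodic_add_of_nat[of \<rho>, OF periodic] below, of "Suc n"]
      assms(3) by (auto simp: b_def mult_ac)
  have b: "b sums (4 * \<alpha> * x * gap_integral \<rho> x * S)"
    unfolding b_def by (rule sums_mult[OF S])
  have "II2_term \<alpha> \<rho> x \<le> suminf b"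
    unfolding II2_term_eq_suminf using bounds
    by (intro suminf_le summable_comparison_test'[OF sums_summable[OF b]] sums_summable[OF b]) auto
  then show ?thesis
    using sums_unique[OF b] by (simp add: mult_ac)
qed

lemma I_plus_II2_term_le:
  fixes \<rho> :: "real \<Rightarrow> real"
  assumes "0 < \<alpha>" "\<alpha> < 2" and "0 < x" "x \<le> 1/4"
    and C1: "\<rho> C1_differentiable_on UNIV" and periodic: "\<And>t. \<rho> (t + 1) = \<rho> t"
    and even: "\<And>t. \<rho> (- t) = \<rho> t" and mono: "mono_on {0..1/2} \<rho>"
    and S: "(\<lambda>n. (real (Suc n) / 2) powr (- \<alpha> - 1)) sums S"
  shows "0 \<le> gap_integral \<rho> x"
    and "I_term \<alpha> \<rho> x + II2_term \<alpha> \<rho> x \<le> (4 * \<alpha> * S * x - 1 / x powr \<alpha>) * gap_integral \<rho> x"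
proof -
  obtain L where L: "L-lipschitz_on {0..x} \<rho>"
    using C1_differentiable_on_imp_lipschitz_on_interval[OF C1] .
  have cont: "continuous_on UNIV \<rho>"
    using C1 by (rule C1_differentiable_imp_continuous_on)
  have below: "\<rho> y \<le> \<rho> x" if "\<bar>y\<bar> \<le> x" for y
    using even_mono_on_le[OF even mono that] assms(4) by simp
  show "0 \<le> gap_integral \<rho> x"
    using continuous_on_subset[OF cont] below by (intro gap_integral_nonneg) auto
  have "I_term \<alpha> \<rho> x \<le> - gap_integral \<rho> x / x powr \<alpha>"
    using I_term_le[OF _ assms(2,3) L] assms(1) below by auto
  moreover have "II2_term \<alpha> \<rho> x \<le> 4 * \<alpha> * S * x * gap_integral \<rho> x"
    using II2_term_le[OF _ assms(3) _ cont even periodic below S] assms(1,4) by simp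
  ultimately show "I_term \<alpha> \<rho> x + II2_term \<alpha> \<rho> x \<le> (4 * \<alpha> * S * x - 1 / x powr \<alpha>) * gap_integral \<rho> x"
    by (simp add: algebra_simps)
qed

theorem lemma2p5:
  fixes \<alpha> :: real
  assumes "0 < \<alpha>" and "\<alpha> < 2"
  shows "\<exists>\<delta>>0. \<forall>\<rho> :: real \<Rightarrow> real.
           \<rho> C1_differentiable_on UNIV \<and>
           (\<forall>t. \<rho> (t + 1) = \<rho> t) \<and>
           (\<forall>t. \<rho> (- t) = \<rho> t) \<and>
           mono_on {0..1/2} \<rho>
           \<longrightarrow> (\<forall>x \<in> {0<..\<delta>}. I_term \<alpha> \<rho> x + II2_term \<alpha> \<rho> x \<le> 0)"
proof -
  obtain S where S: "(\<lambda>n. (real (Suc n) / 2) powr (- \<alpha> - 1)) sums S"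
    using summable_Suc_half_powr[OF assms(1)] by (auto simp: summable_def)
  have "0 \<le> S"
    by (rule sums_le[OF _ sums_zero S]) simp
  define C where "C = 4 * \<alpha> * S"
  have "0 \<le> C"
    using \<open>0 \<le> S\<close> assms(1) by (simp add: C_def)
  define \<delta> where "\<delta> = min (1/4) ((1 / (C + 1)) powr (1 / (1 + \<alpha>)))"
  have "I_term \<alpha> \<rho> x + II2_term \<alpha> \<rho> x \<le> 0"
    if \<rho>: "\<rho> C1_differentiable_on UNIV" "\<forall>t. \<rho> (t + 1) = \<rho> t" "\<forall>t. \<rho> (- t) = \<rho> t"
      "mono_on {0..1/2} \<rho>" and x: "x \<in> {0<..\<delta>}" for \<rho> x
  proof -
    have x: "0 < x" "x \<le> 1/4" "x \<le> (1 / (C + 1)) powr (1 / (1 + \<alpha>))"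
      using x by (auto simp: \<delta>_def)
    note bound = I_plus_II2_term_le[OF assms x(1,2) \<rho>(1) \<rho>(2,3)[rule_format] \<rho>(4) S]
    have "C * x - 1 / x powr \<alpha> \<le> 0"
      using mult_le_inverse_powr[OF assms(1) \<open>0 \<le> C\<close> x(1,3)] by simp
    with bound show ?thesis
      unfolding C_def by (meson mult_nonpos_nonneg order_trans)
  qed
  moreover have "\<delta> > 0"
    using \<open>0 \<le> C\<close> by (simp add: \<delta>_def)
  ultimately show ?thesis by blast
qed

end
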